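(* Let $d\ge2$. (1) If $y,y_0\in Y_d$ are such that $\tau_{y_0}\in\overline{A_{d+1}\tau_y}$ and $y_0$ is L, then $y$ is L. (2) If $x,x_0\in X_d$ are such that $x_0\in\overline{A_dx}$ and $x_0$ is GL, then $x$ is GL.
   Context: $X_k$ is the space of unimodular lattices in $\mathbb{R}^k$ ($\cong SL_k(\mathbb{R})/SL_k(\mathbb{Z})$, coset of $g$ = lattice spanned by the columns of $g$), with quotient topology. $Y_d$ is the space of grids $x+v$ ($x\in X_d$, $v\in\mathbb{R}^d$). The embedding $\tau:Y_d\to X_{d+1}$ sends the grid $y=\bar g+v$ ($\bar g$ the lattice spanned by columns of $g\in SL_d(\mathbb{R})$) to the lattice $\tau_y=\begin{pmatrix} g& v\\0&1\end{pmatrix}SL_{d+1}(\mathbb{Z})$, i.e. $\tau_y=\{(u+nv,n)^t: u\in\bar g,\ n\in\mathbb{Z}\}$. $A_k$ is the group of positive diagonal $k\times k$ matrices of determinant one. For $w\in\mathbb{R}^d$, $N(w)=\prod_iw_i$; for a grid $y$, $N(y)=\inf\{|N(w)|:w\in y\}$ and $n(x+v)=x+nv$. A grid $y$ is L if $\inf_{n\neq0}|nN(ny)|=0$; a lattice $x\in X_d$ is GL if every grid $x+v$ ($v\in\mathbb{R}^d$) is L. *)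

theory Defs
  imports "HOL-Analysis.Analysis"
begin

definition quotient_topology :: "'a topology \<Rightarrow> ('a \<Rightarrow> 'b) \<Rightarrow> 'b topology" where
  "quotient_topology X q =
     topology (\<lambda>U. U \<subseteq> q ` topspace X \<and> openin X {x \<in> topspace X. q x \<in> U})"

lemma istopology_quotient:
  "istopology (\<lambda>U. U \<subseteq> q ` topspace X \<and> openin X {x \<in> topspace X. q x \<in> U})"
  unfolding istopology_def
proof (rule conjI)
  show "\<forall>S T. S \<subseteq> q ` topspace X \<and> openin X {x \<in> topspace X. q x \<in> S} \<longrightarrow>
      T \<subseteq> q ` topspace X \<and> openin X {x \<in> topspace X. q x \<in> T} \<longrightarrow>
      S \<inter> T \<subseteq> q ` topspace X \<and> openin X {x \<in> topspace X. q x \<in> S \<inter> T}"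
  proof (intro allI impI)
    fix S T assume S: "S \<subseteq> q ` topspace X \<and> openin X {x \<in> topspace X. q x \<in> S}"
      and T: "T \<subseteq> q ` topspace X \<and> openin X {x \<in> topspace X. q x \<in> T}"
    have eq: "{x \<in> topspace X. q x \<in> S \<inter> T} =
          {x \<in> topspace X. q x \<in> S} \<inter> {x \<in> topspace X. q x \<in> T}" by blast
    have "openin X ({x \<in> topspace X. q x \<in> S} \<inter> {x \<in> topspace X. q x \<in> T})"
      using S T by (intro openin_Int) simp_all
    then show "S \<inter> T \<subseteq> q ` topspace X \<and> openin X {x \<in> topspace X. q x \<in> S \<inter> T}"
      using S eq by (simp add: le_infI1)
  qed
next
  show "\<forall>K. (\<forall>U\<in>K. U \<subseteq> q ` topspace X \<and> openin X {x \<in> topspace X. q x \<in> U}) \<longrightarrow>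
      \<Union>K \<subseteq> q ` topspace X \<and> openin X {x \<in> topspace X. q x \<in> \<Union>K}"
  proof (intro allI impI)
    fix K assume K: "\<forall>U\<in>K. U \<subseteq> q ` topspace X \<and> openin X {x \<in> topspace X. q x \<in> U}"
    have eq: "{x \<in> topspace X. q x \<in> \<Union>K} = (\<Union>U\<in>K. {x \<in> topspace X. q x \<in> U})" by blast
    have "openin X (\<Union>U\<in>K. {x \<in> topspace X. q x \<in> U})"
      using K by (intro openin_Union) blast
    then have "openin X {x \<in> topspace X. q x \<in> \<Union>K}" using eq by simp
    moreover have "\<Union>K \<subseteq> q ` topspace X" using K by blast
    ultimately show "\<Union>K \<subseteq> q ` topspace X \<and> openin X {x \<in> topspace X. q x \<in> \<Union>K}" by blast
  qed
qed

lemma openin_quotient_topology: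
  "openin (quotient_topology X q) U \<longleftrightarrow>
     U \<subseteq> q ` topspace X \<and> openin X {x \<in> topspace X. q x \<in> U}"
  unfolding quotient_topology_def topology_inverse'[OF istopology_quotient] ..

definition lat_of :: "real^'k^'k \<Rightarrow> (real^'k) set" where
  "lat_of g = {g *v z | z. \<forall>i. z $ i \<in> \<int>}"

definition SLR :: "(real^'k^'k) set" where
  "SLR = {g. det g = 1}"

text \<open>X_k = SL_k(R)/SL_k(Z), with the quotient topology.\<close>
definition Xspace :: "(real^'k) set set" where
  "Xspace = lat_of ` SLR"

definition Xtop :: "(real^'k) set topology" where
  "Xtop = quotient_topology (subtopology euclidean SLR) lat_of"

definition Adiag :: "(real^'k^'k) set" where
  "Adiag = {(\<chi> i j. if i = j then a $ i else 0) | a. (\<forall>i. a $ i > 0) \<and> (\<Prod>i\<in>UNIV. a $ i) = 1}"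

definition act :: "real^'k^'k \<Rightarrow> (real^'k) set \<Rightarrow> (real^'k) set" where
  "act a x = (\<lambda>u. a *v u) ` x"

definition orbitA :: "(real^'k) set \<Rightarrow> (real^'k) set set" where
  "orbitA x = {act a x | a. a \<in> Adiag}"

definition grid :: "real^'d^'d \<Rightarrow> real^'d \<Rightarrow> (real^'d) set" where
  "grid g v = (\<lambda>u. u + v) ` lat_of g"

definition Nvec :: "real^'d \<Rightarrow> real" where
  "Nvec w = (\<Prod>i\<in>UNIV. w $ i)"

definition Ngrid :: "(real^'d) set \<Rightarrow> real" where
  "Ngrid y = Inf {\<bar>Nvec w\<bar> | w. w \<in> y}"

definition is_L :: "real^'d^'d \<Rightarrow> real^'d \<Rightarrow> bool" where
  "is_L g v \<longleftrightarrow> Inf {\<bar>real_of_int n * Ngrid (grid g (of_int n *\<^sub>R v))\<bar> | n::int. n \<noteq> 0} = 0"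

definition is_GL :: "(real^'d) set \<Rightarrow> bool" where
  "is_GL x \<longleftrightarrow> (\<forall>g v. det g = 1 \<and> lat_of g = x \<longrightarrow> is_L g v)"

text \<open>R^{d+1} is modelled as real^('d option); None is the last coordinate.\<close>
definition tau_mat :: "real^'d^'d \<Rightarrow> real^'d \<Rightarrow> real^('d option)^('d option)" where
  "tau_mat g v = (\<chi> i j. case i of
      Some a \<Rightarrow> (case j of Some b \<Rightarrow> g $ a $ b | None \<Rightarrow> v $ a)
    | None \<Rightarrow> (case j of Some b \<Rightarrow> 0 | None \<Rightarrow> 1))"

definition tau :: "real^'d^'d \<Rightarrow> real^'d \<Rightarrow> (real^('d option)) set" where
  "tau g v = lat_of (tau_mat g v)"

end

theory Submission
  imports Defs
begin

text \<open>
  Property L of a grid y is read off the lattice \<open>\<tau>\<^sub>y\<close>: y is L iff \<open>\<tau>\<^sub>y\<close> contains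
  vectors with nonzero last coordinate and arbitrarily small \<open>|N|\<close>. Diagonal matrices of
  determinant one preserve N and the vanishing of coordinates, and such a vector of
  \<open>\<tau>\<^sub>y\<^sub>0\<close> is approximated by vectors of lattices in \<open>A \<tau>\<^sub>y\<close>, which proves (1).

  For (2), if x + v is not L there is \<open>\<epsilon> > 0\<close> with \<open>|n N(u + n v)| \<ge> \<epsilon>\<close> for all
  u in x and n \<noteq> 0. This bound is invariant under A, under translating v by a lattice
  vector, and survives limits. Along a sequence \<open>a\<^sub>k x \<rightarrow> x\<^sub>0\<close> the translated vectors
  \<open>a\<^sub>k v\<close> can be reduced modulo the lattice into a fundamental parallelepiped, and a convergent
  subsequence yields a grid of \<open>x\<^sub>0\<close> that is not L. Convergence in the quotient lifts to
  convergence of matrices because the quotient map is open.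
\<close>

abbreviation int_vec :: "real^'n \<Rightarrow> bool" where
  "int_vec z \<equiv> \<forall>i. z $ i \<in> \<int>"

abbreviation int_matrix :: "real^'n^'m \<Rightarrow> bool" where
  "int_matrix \<gamma> \<equiv> \<forall>i j. \<gamma> $ i $ j \<in> \<int>"

lemma mem_lat_of: "int_vec z \<Longrightarrow> g *v z \<in> lat_of g"
  unfolding lat_of_def by blast

lemma lat_of_add_int_multiple:
  assumes "u \<in> lat_of h" "w \<in> lat_of h"
  shows "u + of_int n *\<^sub>R w \<in> lat_of h"
proof -
  obtain z z' where "int_vec z" "u = h *v z" "int_vec z'" "w = h *v z'"
    using assms unfolding lat_of_def by blast
  then have "int_vec (z + of_int n *\<^sub>R z')" and "u + of_int n *\<^sub>R w = h *v (z + of_int n *\<^sub>R z')"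
    by (auto simp: matrix_vector_right_distrib matrix_vector_mult_scaleR)
  then show ?thesis by (simp add: mem_lat_of)
qed

lemma lat_of_mult_int_subset:
  assumes "int_matrix \<gamma>"
  shows "lat_of (h ** \<gamma>) \<subseteq> lat_of h"
proof
  fix u assume "u \<in> lat_of (h ** \<gamma>)"
  then obtain z where z: "int_vec z" "u = h *v (\<gamma> *v z)"
    unfolding lat_of_def by (auto simp: matrix_vector_mul_assoc)
  have "int_vec (\<gamma> *v z)"
    using assms z(1) by (auto simp: matrix_vector_mult_def intro!: Ints_mult)
  then show "u \<in> lat_of h" using z(2) by (simp add: mem_lat_of)
qed

lemma lat_of_eq_imp_int_factor:
  assumes "lat_of h = lat_of g"
  shows "\<exists>\<gamma>. int_matrix \<gamma> \<and> g = h ** \<gamma>"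
proof -
  have "\<forall>j. \<exists>z. int_vec z \<and> g *v axis j 1 = h *v z"
  proof
    fix j
    have "g *v axis j 1 \<in> lat_of h"
      using assms mem_lat_of[of "axis j 1" g] by (simp add: axis_def)
    then show "\<exists>z. int_vec z \<and> g *v axis j 1 = h *v z"
      unfolding lat_of_def by blast
  qed
  then obtain Z where Z: "\<And>j. int_vec (Z j)" "\<And>j. g *v axis j 1 = h *v Z j" by metis
  define \<gamma> where "\<gamma> = (\<chi> i j. Z j $ i)"
  have "g $ i $ j = (h ** \<gamma>) $ i $ j" for i j
  proof -
    have "g $ i $ j = (g *v axis j 1) $ i"
      by (simp add: matrix_vector_mult_basis column_def)
    also have "\<dots> = (h *v Z j) $ i" using Z(2) by simp
    finally show ?thesis by (simp add: \<gamma>_def matrix_vector_mult_def matrix_matrix_mult_def)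
  qed
  then show ?thesis using Z(1) by (intro exI[of _ \<gamma>]) (simp add: \<gamma>_def vec_eq_iff)
qed

text \<open>SL_k(\<int>); the integral inverse is part of the definition so that no adjugate formula is needed.\<close>
definition SLZ :: "(real^'k^'k) set" where
  "SLZ = {\<gamma>. int_matrix \<gamma> \<and> det \<gamma> = 1 \<and> (\<exists>\<gamma>'. int_matrix \<gamma>' \<and> \<gamma> ** \<gamma>' = mat 1)}"

lemma lat_of_eq_iff_SLZ:
  fixes h g :: "real^'k^'k"
  assumes "h \<in> SLR"
  shows "g \<in> SLR \<and> lat_of g = lat_of h \<longleftrightarrow> (\<exists>\<gamma>\<in>SLZ. g = h ** \<gamma>)"
proof
  assume g: "g \<in> SLR \<and> lat_of g = lat_of h"
  obtain \<gamma> where \<gamma>: "int_matrix \<gamma>" "g = h ** \<gamma>"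
    using lat_of_eq_imp_int_factor g by metis
  obtain \<gamma>' where \<gamma>': "int_matrix \<gamma>'" "h = g ** \<gamma>'"
    using lat_of_eq_imp_int_factor g by metis
  have "invertible h" using assms by (simp add: SLR_def invertible_det_nz)
  then obtain B where B: "B ** h = mat 1" using invertible_left_inverse by blast
  have "\<gamma> ** \<gamma>' = B ** ((h ** \<gamma>) ** \<gamma>')" by (simp add: B matrix_mul_assoc)
  also have "\<dots> = B ** h" by (simp only: \<gamma>(2)[symmetric] \<gamma>'(2)[symmetric])
  finally have "\<gamma> ** \<gamma>' = mat 1" by (simp add: B)
  moreover have "det \<gamma> = 1" using g assms \<gamma>(2) by (simp add: SLR_def det_mul)
  ultimately show "\<exists>\<gamma>\<in>SLZ. g = h ** \<gamma>" using \<gamma> \<gamma>'(1) unfolding SLZ_def by blast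
next
  assume "\<exists>\<gamma>\<in>SLZ. g = h ** \<gamma>"
  then obtain \<gamma> \<gamma>' where \<gamma>: "int_matrix \<gamma>" "det \<gamma> = 1" "int_matrix \<gamma>'" "\<gamma> ** \<gamma>' = mat 1"
    and g: "g = h ** \<gamma>" unfolding SLZ_def by blast
  have "h = g ** \<gamma>'" using g \<gamma>(4) by (simp add: matrix_mul_assoc[symmetric])
  then have "lat_of h \<subseteq> lat_of g" using lat_of_mult_int_subset[OF \<gamma>(3)] by simp
  moreover have "lat_of g \<subseteq> lat_of h" using g lat_of_mult_int_subset[OF \<gamma>(1)] by simp
  ultimately show "g \<in> SLR \<and> lat_of g = lat_of h"
    using assms g \<gamma>(2) by (auto simp: SLR_def det_mul)
qed

section \<open>The topology of the space of lattices\<close>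

lemma openin_Xtop_image:
  fixes U :: "(real^'k^'k) set"
  assumes "open U"
  shows "openin Xtop (lat_of ` (U \<inter> SLR))"
proof -
  define T where "T = (\<Union>\<gamma>\<in>SLZ. (\<lambda>h. h ** \<gamma>) -` U)"
  have "open T"
    unfolding T_def matrix_matrix_mult_def
    by (intro open_UN ballI open_vimage assms continuous_intros)
  moreover have "{h \<in> SLR. lat_of h \<in> lat_of ` (U \<inter> SLR)} = T \<inter> SLR"
  proof -
    have "lat_of h \<in> lat_of ` (U \<inter> SLR) \<longleftrightarrow> h \<in> T" if "h \<in> SLR" for h
    proof -
      have "lat_of h \<in> lat_of ` (U \<inter> SLR) \<longleftrightarrow> (\<exists>g\<in>U. g \<in> SLR \<and> lat_of g = lat_of h)"
        by auto
      also have "\<dots> \<longleftrightarrow> (\<exists>g\<in>U. \<exists>\<gamma>\<in>SLZ. g = h ** \<gamma>)"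
        using lat_of_eq_iff_SLZ[OF that] by simp
      also have "\<dots> \<longleftrightarrow> h \<in> T" unfolding T_def by auto
      finally show ?thesis .
    qed
    then show ?thesis by blast
  qed
  ultimately show ?thesis
    unfolding Xtop_def openin_quotient_topology
    by (auto simp: Int_commute openin_open_Int)
qed

lemma topspace_Xtop: "topspace Xtop = lat_of ` SLR"
proof
  show "topspace Xtop \<subseteq> lat_of ` SLR"
    using conjunct1[OF openin_topspace[of Xtop, unfolded Xtop_def openin_quotient_topology]]
    by (simp add: Xtop_def)
  show "lat_of ` SLR \<subseteq> topspace Xtop"
    using openin_subset[OF openin_Xtop_image[OF open_UNIV]] by simp
qed

lemma closure_of_Xtop_imp_closure:
  fixes g0 :: "real^'k^'k"
  assumes "g0 \<in> SLR" "lat_of g0 \<in> Xtop closure_of S"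
  shows "g0 \<in> closure {h \<in> SLR. lat_of h \<in> S}"
  unfolding closure_approachable
proof (intro allI impI)
  fix e :: real assume "0 < e"
  then have "lat_of g0 \<in> lat_of ` (ball g0 e \<inter> SLR)" using assms(1) by simp
  with assms(2) obtain y where "y \<in> S" "y \<in> lat_of ` (ball g0 e \<inter> SLR)"
    using openin_Xtop_image[OF open_ball] unfolding in_closure_of by metis
  then show "\<exists>h\<in>{h \<in> SLR. lat_of h \<in> S}. dist h g0 < e" by (auto simp: dist_commute)
qed

lemma closure_of_orbitA_imp_seq:
  fixes g0 :: "real^'k^'k"
  assumes "g0 \<in> SLR" "lat_of g0 \<in> Xtop closure_of (orbitA x)"
  obtains h D where "h \<longlonglongrightarrow> g0" "\<And>k. h k \<in> SLR" "\<And>k. D k \<in> Adiag"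
    "\<And>k. lat_of (h k) = act (D k) x"
proof -
  obtain h where h: "\<And>k. h k \<in> SLR \<and> lat_of (h k) \<in> orbitA x" "h \<longlonglongrightarrow> g0"
    using closure_of_Xtop_imp_closure[OF assms] unfolding closure_sequential by blast
  then have "\<forall>k. \<exists>D. D \<in> Adiag \<and> lat_of (h k) = act D x" unfolding orbitA_def by blast
  then obtain D where "\<And>k. D k \<in> Adiag" "\<And>k. lat_of (h k) = act (D k) x" by metis
  then show ?thesis using that h by blast
qed

lemma Adiag_mult_vec:
  assumes "D \<in> Adiag"
  obtains a where "\<forall>i. 0 < a $ i" "(\<Prod>i\<in>UNIV. a $ i) = 1" "\<And>u. D *v u = (\<chi> i. a $ i * u $ i)"
proof -
  obtain a where a: "D = (\<chi> i j. if i = j then a $ i else 0)" "\<forall>i. 0 < a $ i" "(\<Prod>i\<in>UNIV. a $ i) = 1"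
    using assms unfolding Adiag_def by blast
  have "D *v u = (\<chi> i. a $ i * u $ i)" for u
    unfolding a(1) matrix_vector_mult_def
    by (simp add: vec_eq_iff if_distrib[of "\<lambda>x. x * y" for y] cong: if_cong)
  then show ?thesis using that a(2,3) by blast
qed

lemma Nvec_Adiag_mult: "D \<in> Adiag \<Longrightarrow> Nvec (D *v u) = Nvec u"
  by (elim Adiag_mult_vec) (simp add: Nvec_def prod.distrib)

lemma Adiag_mult_vec_nth_eq_0: "D \<in> Adiag \<Longrightarrow> (D *v u) $ i = 0 \<longleftrightarrow> u $ i = 0"
  by (elim Adiag_mult_vec) (simp add: less_imp_neq[symmetric])

section \<open>Characterisations of property L\<close>

lemma Inf_nonneg_eq_0_iff:
  fixes S :: "real set"
  assumes "S \<noteq> {}" "\<And>s. s \<in> S \<Longrightarrow> 0 \<le> s"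
  shows "Inf S = 0 \<longleftrightarrow> (\<forall>e>0. \<exists>s\<in>S. s < e)"
proof -
  have "bdd_below S" using assms(2) by (intro bdd_belowI[of _ 0]) simp
  moreover have "0 \<le> Inf S" using assms by (intro cInf_greatest) auto
  ultimately have "Inf S = 0 \<longleftrightarrow> (\<forall>e>0. Inf S < e)"
    by (metis order_less_irrefl order_le_less)
  then show ?thesis using cInf_less_iff[OF assms(1) \<open>bdd_below S\<close>] by simp
qed

lemma Ngrid_grid_less_iff: "Ngrid (grid g w) < c \<longleftrightarrow> (\<exists>u\<in>lat_of g. \<bar>Nvec (u + w)\<bar> < c)"
proof -
  have eq: "{\<bar>Nvec y\<bar> | y. y \<in> grid g w} = (\<lambda>u. \<bar>Nvec (u + w)\<bar>) ` lat_of g"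
    unfolding grid_def by auto
  have "0 \<in> lat_of g" using mem_lat_of[of 0 g] by simp
  then show ?thesis
    unfolding Ngrid_def eq by (subst cInf_less_iff) (auto intro: bdd_belowI[of _ 0])
qed

lemma Ngrid_nonneg: "0 \<le> Ngrid (grid g w)"
  using Ngrid_grid_less_iff[of g w 0] by simp

lemma is_L_iff:
  "is_L g v \<longleftrightarrow>
     (\<forall>e>0. \<exists>u\<in>lat_of g. \<exists>n::int. n \<noteq> 0 \<and> \<bar>of_int n * Nvec (u + of_int n *\<^sub>R v)\<bar> < e)"
proof -
  have "\<bar>of_int n * Ngrid (grid g (of_int n *\<^sub>R v))\<bar> < e \<longleftrightarrow>
      (\<exists>u\<in>lat_of g. \<bar>of_int n * Nvec (u + of_int n *\<^sub>R v)\<bar> < e)" if "n \<noteq> 0" for n :: int and e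
  proof -
    have n: "0 < \<bar>real_of_int n\<bar>" using that by simp
    have "\<bar>of_int n * Ngrid (grid g (of_int n *\<^sub>R v))\<bar> < e \<longleftrightarrow>
        Ngrid (grid g (of_int n *\<^sub>R v)) < e / \<bar>of_int n\<bar>"
      using n by (simp add: abs_mult abs_of_nonneg[OF Ngrid_nonneg] pos_less_divide_eq mult.commute)
    also have "\<dots> \<longleftrightarrow> (\<exists>u\<in>lat_of g. \<bar>of_int n * Nvec (u + of_int n *\<^sub>R v)\<bar> < e)"
      using n by (simp add: Ngrid_grid_less_iff abs_mult pos_less_divide_eq mult.commute)
    finally show ?thesis .
  qed
  moreover have "is_L g v \<longleftrightarrow>
      (\<forall>e>0. \<exists>n::int. n \<noteq> 0 \<and> \<bar>of_int n * Ngrid (grid g (of_int n *\<^sub>R v))\<bar> < e)"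
    unfolding is_L_def by (subst Inf_nonneg_eq_0_iff) (auto intro: exI[of _ 1], blast)
  ultimately show ?thesis by metis
qed

definition extend_vec :: "real^'d \<Rightarrow> real \<Rightarrow> real^('d option)" where
  "extend_vec w t = (\<chi> i. case i of Some j \<Rightarrow> w $ j | None \<Rightarrow> t)"

lemma extend_vec_nth [simp]:
  "extend_vec w t $ None = t" "extend_vec w t $ Some j = w $ j"
  by (simp_all add: extend_vec_def)

lemma Nvec_extend_vec: "Nvec (extend_vec w t) = Nvec w * t"
  by (simp add: Nvec_def UNIV_option_conv prod.reindex)

lemma tau_mat_mult_vec:
  "tau_mat g v *v z = extend_vec (g *v (\<chi> j. z $ Some j) + z $ None *\<^sub>R v) (z $ None)"
  by (simp add: vec_eq_iff matrix_vector_mult_def tau_mat_def UNIV_option_conv sum.reindex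
      split: option.split)

lemma tau_eq: "tau g v = {extend_vec (u + of_int n *\<^sub>R v) (of_int n) | u n. u \<in> lat_of g}"
proof (intro equalityI subsetI)
  fix y assume "y \<in> tau g v"
  then obtain z where z: "int_vec z" "y = tau_mat g v *v z" unfolding tau_def lat_of_def by blast
  obtain n where "z $ None = of_int n" using z(1) Ints_cases by metis
  moreover have "g *v (\<chi> j. z $ Some j) \<in> lat_of g" using z(1) by (simp add: mem_lat_of)
  ultimately show "y \<in> {extend_vec (u + of_int n *\<^sub>R v) (of_int n) | u n. u \<in> lat_of g}"
    using z(2) by (auto simp: tau_mat_mult_vec)
next
  fix y assume "y \<in> {extend_vec (u + of_int n *\<^sub>R v) (of_int n) | u n. u \<in> lat_of g}"
  then obtain z n where z: "int_vec z" "y = extend_vec (g *v z + of_int n *\<^sub>R v) (of_int n)"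
    unfolding lat_of_def by blast
  have "int_vec (extend_vec z (of_int n))" using z(1) by (simp add: extend_vec_def split: option.split)
  moreover have "(\<chi> j. extend_vec z (of_int n) $ Some j) = z" by (simp add: vec_eq_iff)
  ultimately show "y \<in> tau g v"
    unfolding tau_def using z(2) mem_lat_of[of "extend_vec z (of_int n)" "tau_mat g v"]
    by (simp add: tau_mat_mult_vec)
qed

lemma is_L_iff_tau: "is_L g v \<longleftrightarrow> (\<forall>e>0. \<exists>y\<in>tau g v. y $ None \<noteq> 0 \<and> \<bar>Nvec y\<bar> < e)"
proof -
  have "(\<exists>y\<in>tau g v. y $ None \<noteq> 0 \<and> \<bar>Nvec y\<bar> < e) \<longleftrightarrow>
      (\<exists>u\<in>lat_of g. \<exists>n::int. n \<noteq> 0 \<and> \<bar>of_int n * Nvec (u + of_int n *\<^sub>R v)\<bar> < e)" for e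
  proof
    assume "\<exists>y\<in>tau g v. y $ None \<noteq> 0 \<and> \<bar>Nvec y\<bar> < e"
    then obtain u and n :: int where "u \<in> lat_of g" "n \<noteq> 0" "\<bar>Nvec (u + of_int n *\<^sub>R v) * of_int n\<bar> < e"
      unfolding tau_eq by (auto simp: Nvec_extend_vec)
    then show "\<exists>u\<in>lat_of g. \<exists>n::int. n \<noteq> 0 \<and> \<bar>of_int n * Nvec (u + of_int n *\<^sub>R v)\<bar> < e"
      by (metis mult.commute)
  next
    assume "\<exists>u\<in>lat_of g. \<exists>n::int. n \<noteq> 0 \<and> \<bar>of_int n * Nvec (u + of_int n *\<^sub>R v)\<bar> < e"
    then obtain u and n :: int where u: "u \<in> lat_of g" "n \<noteq> 0" "\<bar>of_int n * Nvec (u + of_int n *\<^sub>R v)\<bar> < e"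
      by blast
    then have "extend_vec (u + of_int n *\<^sub>R v) (of_int n) \<in> tau g v" unfolding tau_eq by blast
    then show "\<exists>y\<in>tau g v. y $ None \<noteq> 0 \<and> \<bar>Nvec y\<bar> < e"
      using u(2,3) by (intro bexI) (auto simp: Nvec_extend_vec mult.commute)
  qed
  then show ?thesis unfolding is_L_iff by simp
qed

section \<open>Part (1): grids\<close>

lemma tendsto_matrix_vector_mult:
  fixes A :: "'b \<Rightarrow> real^'n^'m"
  assumes "(A \<longlongrightarrow> A0) F" "(u \<longlongrightarrow> u0) F"
  shows "((\<lambda>k. A k *v u k) \<longlongrightarrow> A0 *v u0) F"
  by (rule vec_tendstoI) (auto simp: matrix_vector_mult_def intro!: tendsto_intros assms)

lemma tendsto_Nvec: "(u \<longlongrightarrow> u0) F \<Longrightarrow> ((\<lambda>k. Nvec (u k)) \<longlongrightarrow> Nvec u0) F"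
  unfolding Nvec_def by (intro tendsto_intros)

lemma small_vectors_of_closure_orbitA:
  fixes g0 :: "real^'k^'k"
  assumes "g0 \<in> SLR" "lat_of g0 \<in> Xtop closure_of (orbitA x)"
    and small: "\<forall>e>0. \<exists>y\<in>lat_of g0. y $ i \<noteq> 0 \<and> \<bar>Nvec y\<bar> < e"
  shows "\<forall>e>0. \<exists>y\<in>x. y $ i \<noteq> 0 \<and> \<bar>Nvec y\<bar> < e"
proof (intro allI impI)
  fix e :: real assume "0 < e"
  obtain h D where h: "h \<longlonglongrightarrow> g0" "\<And>k. D k \<in> Adiag" "\<And>k. lat_of (h k) = act (D k) x"
    using closure_of_orbitA_imp_seq[OF assms(1,2)] by metis
  obtain z where z: "int_vec z" "(g0 *v z) $ i \<noteq> 0" "\<bar>Nvec (g0 *v z)\<bar> < e"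
    using small \<open>0 < e\<close> unfolding lat_of_def by blast
  have lim: "(\<lambda>k. h k *v z) \<longlonglongrightarrow> g0 *v z"
    by (intro tendsto_matrix_vector_mult h(1) tendsto_const)
  have ne: "eventually (\<lambda>k. (h k *v z) $ i \<noteq> 0) sequentially"
    using tendsto_imp_eventually_ne[OF tendsto_vec_nth[OF lim] z(2)] .
  have less: "eventually (\<lambda>k. \<bar>Nvec (h k *v z)\<bar> < e) sequentially"
    using order_tendstoD(2)[OF tendsto_rabs[OF tendsto_Nvec[OF lim]] z(3)] .
  obtain k where k: "(h k *v z) $ i \<noteq> 0" "\<bar>Nvec (h k *v z)\<bar> < e"
    using eventually_conj[OF ne less] unfolding eventually_sequentially by blast
  have "h k *v z \<in> act (D k) x" using mem_lat_of[OF z(1), of "h k"] h(3)[of k] by simp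
  then obtain y where "y \<in> x" "h k *v z = D k *v y" unfolding act_def by blast
  then show "\<exists>y\<in>x. y $ i \<noteq> 0 \<and> \<bar>Nvec y\<bar> < e"
    using k by (auto simp: Adiag_mult_vec_nth_eq_0[OF h(2)] Nvec_Adiag_mult[OF h(2)])
qed

lemma is_L_of_closure_orbitA_tau:
  assumes "tau g0 v0 \<in> Xtop closure_of (orbitA (tau g v))" "is_L g0 v0"
  shows "is_L g v"
proof -
  have "tau g0 v0 \<in> topspace Xtop" using assms(1) by (simp add: in_closure_of)
  then obtain G0 where "G0 \<in> SLR" "tau g0 v0 = lat_of G0" by (auto simp: topspace_Xtop)
  then show ?thesis
    using assms small_vectors_of_closure_orbitA[of G0 "tau g v" None] by (simp add: is_L_iff_tau)
qed

section \<open>Part (2): lattices\<close>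

text \<open>Quantitative failure of property L for the grid x + w.\<close>
definition Nmult_bounded_below :: "(real^'d) set \<Rightarrow> real^'d \<Rightarrow> real \<Rightarrow> bool" where
  "Nmult_bounded_below x w e \<longleftrightarrow>
     (\<forall>u\<in>x. \<forall>n::int. n \<noteq> 0 \<longrightarrow> e \<le> \<bar>of_int n * Nvec (u + of_int n *\<^sub>R w)\<bar>)"

lemma not_is_L_iff: "\<not> is_L g v \<longleftrightarrow> (\<exists>e>0. Nmult_bounded_below (lat_of g) v e)"
  unfolding is_L_iff Nmult_bounded_below_def by (auto simp: not_less)

lemma Nmult_bounded_below_act_Adiag:
  assumes "D \<in> Adiag" "Nmult_bounded_below x w e"
  shows "Nmult_bounded_below (act D x) (D *v w) e"
proof -
  have "D *v u + c *\<^sub>R (D *v w) = D *v (u + c *\<^sub>R w)" for u and c :: real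
    by (simp add: matrix_vector_right_distrib matrix_vector_mult_scaleR)
  then show ?thesis
    using assms(2) unfolding Nmult_bounded_below_def act_def by (simp add: Nvec_Adiag_mult[OF assms(1)])
qed

lemma Nmult_bounded_below_translate:
  assumes "u0 \<in> lat_of h" "Nmult_bounded_below (lat_of h) w e"
  shows "Nmult_bounded_below (lat_of h) (w + u0) e"
  unfolding Nmult_bounded_below_def
proof (intro ballI allI impI)
  fix u and n :: int assume "u \<in> lat_of h" "n \<noteq> 0"
  moreover have "u + of_int n *\<^sub>R (w + u0) = (u + of_int n *\<^sub>R u0) + of_int n *\<^sub>R w"
    by (simp add: algebra_simps)
  ultimately show "e \<le> \<bar>of_int n * Nvec (u + of_int n *\<^sub>R (w + u0))\<bar>"
    using assms lat_of_add_int_multiple unfolding Nmult_bounded_below_def by metis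
qed

lemma Nmult_bounded_below_limit:
  assumes "h \<longlonglongrightarrow> h0" "w \<longlonglongrightarrow> w0" "\<And>k. Nmult_bounded_below (lat_of (h k)) (w k) e"
  shows "Nmult_bounded_below (lat_of h0) w0 e"
  unfolding Nmult_bounded_below_def
proof (intro ballI allI impI)
  fix u and n :: int assume "u \<in> lat_of h0" "n \<noteq> 0"
  then obtain z where z: "int_vec z" "u = h0 *v z" unfolding lat_of_def by blast
  have "(\<lambda>k. \<bar>of_int n * Nvec (h k *v z + of_int n *\<^sub>R w k)\<bar>)
      \<longlonglongrightarrow> \<bar>of_int n * Nvec (h0 *v z + of_int n *\<^sub>R w0)\<bar>"
    by (intro tendsto_intros tendsto_Nvec tendsto_matrix_vector_mult assms(1,2))
  moreover have "e \<le> \<bar>of_int n * Nvec (h k *v z + of_int n *\<^sub>R w k)\<bar>" for k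
    using assms(3)[of k] mem_lat_of[OF z(1)] \<open>n \<noteq> 0\<close> unfolding Nmult_bounded_below_def by blast
  ultimately show "e \<le> \<bar>of_int n * Nvec (u + of_int n *\<^sub>R w0)\<bar>"
    using z(2) by (intro LIMSEQ_le_const) auto
qed

lemma lat_of_translate_unit_cube:
  fixes h :: "real^'n^'n"
  assumes "invertible h"
  obtains t u where "t \<in> cbox 0 1" "u \<in> lat_of h" "h *v t = w + u"
proof -
  obtain B where B: "h ** B = mat 1" using assms invertible_right_inverse by blast
  define s where "s = B *v w"
  define z :: "real^'n" where "z = (\<chi> i. - of_int \<lfloor>s $ i\<rfloor>)"
  have "h *v (s + z) = w + h *v z"
    by (simp add: s_def matrix_vector_right_distrib matrix_vector_mul_assoc B)
  moreover have "s + z \<in> cbox 0 1"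
    unfolding mem_box_cart z_def by (auto simp: algebra_simps) linarith+
  moreover have "h *v z \<in> lat_of h" by (intro mem_lat_of) (simp add: z_def)
  ultimately show ?thesis using that by blast
qed

lemma is_GL_of_closure_orbitA:
  assumes "x0 \<in> Xspace" "x0 \<in> Xtop closure_of (orbitA x)" "is_GL x0"
  shows "is_GL x"
  unfolding is_GL_def
proof (intro allI impI)
  fix g v assume g: "det g = 1 \<and> lat_of g = x"
  show "is_L g v"
  proof (rule ccontr)
    assume "\<not> is_L g v"
    then obtain e where e: "0 < e" "Nmult_bounded_below x v e" using g not_is_L_iff by blast
    obtain g0 where g0: "g0 \<in> SLR" "x0 = lat_of g0" using assms(1) unfolding Xspace_def by blast
    obtain h D where h: "h \<longlonglongrightarrow> g0" "\<And>k. h k \<in> SLR" "\<And>k. D k \<in> Adiag"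
      "\<And>k. lat_of (h k) = act (D k) x"
      using closure_of_orbitA_imp_seq g0 assms(2) by metis
    have "\<forall>k. \<exists>t u. t \<in> cbox 0 1 \<and> u \<in> lat_of (h k) \<and> h k *v t = D k *v v + u"
      using h(2) lat_of_translate_unit_cube by (metis SLR_def invertible_det_nz mem_Collect_eq one_neq_zero)
    then obtain t u where t: "\<And>k. t k \<in> cbox 0 1" "\<And>k. u k \<in> lat_of (h k)"
      "\<And>k. h k *v t k = D k *v v + u k" by metis
    have bound: "Nmult_bounded_below (lat_of (h k)) (h k *v t k) e" for k
      unfolding t(3) h(4)
      using Nmult_bounded_below_translate[OF t(2)] Nmult_bounded_below_act_Adiag[OF h(3) e(2)]
      by (simp add: h(4))
    obtain r t0 where r: "strict_mono r" "(t \<circ> r) \<longlonglongrightarrow> t0"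
      using compact_cbox[unfolded compact_def] t(1) by metis
    have hr: "(h \<circ> r) \<longlonglongrightarrow> g0" using LIMSEQ_subseq_LIMSEQ[OF h(1) r(1)] .
    have "Nmult_bounded_below x0 (g0 *v t0) e"
      unfolding g0(2)
      by (rule Nmult_bounded_below_limit[OF hr tendsto_matrix_vector_mult[OF hr r(2)]])
        (simp add: bound)
    moreover have "is_L g0 (g0 *v t0)" using assms(3) g0 unfolding is_GL_def SLR_def by blast
    ultimately show False using e(1) not_is_L_iff g0(2) by blast
  qed
qed

theorem proposition2p1:
  fixes g g0 :: "real^'d^'d" and v v0 :: "real^'d" and x x0 :: "(real^'d) set"
  assumes "CARD('d) \<ge> 2"
  shows "(det g = 1 \<and> det g0 = 1 \<and>
          tau g0 v0 \<in> Xtop closure_of (orbitA (tau g v)) \<and> is_L g0 v0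
          \<longrightarrow> is_L g v)
       \<and> (x \<in> Xspace \<and> x0 \<in> Xspace \<and>
          x0 \<in> Xtop closure_of (orbitA x) \<and> is_GL x0
          \<longrightarrow> is_GL x)"
  using is_L_of_closure_orbitA_tau is_GL_of_closure_orbitA by blast

end
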